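(* Let $\theta$ be a linear operator on $\Lambda$ that is shift-invariant, i.e. $E^a\theta=\theta E^a$ for all $a\in\mathbb C$. Then $$\theta=\sum_{\lambda\in\mathcal P}\big(\epsilon\,\theta\, m_\lambda(\mathbf y)\big)\,\mathbf D_\lambda,$$ meaning that $\theta p=\sum_{\lambda}(\epsilon\,\theta\, m_\lambda)\,\mathbf D_\lambda p$ for all $p\in\Lambda$.
   Context: $\Lambda$ is the algebra of complex symmetric functions in $\mathbf y=(y_1,y_2,\dots)$. $\mathcal P$ is the set of all partitions and $m_\lambda$ is the monomial symmetric function. $\mathbf D_i$ ($i\ge1$) is the linear operator with $\mathbf D_im_\lambda=i!\,m_{\lambda\setminus i}$ if $i$ is a part of $\lambda$ (one part $i$ removed), and $0$ otherwise. $\mathbf D_\lambda=\prod_{i:\lambda_i>0}\mathbf D_{\lambda_i}/\lambda_i!$, with $\mathbf D_\emptyset$ the identity. These operators commute. $E^ap(y_1,\dots)=p(a,y_1,\dots)$ and $\epsilon p=p(0,0,\dots)$. The sum acts finitely on each $p$. *)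

theory Defs
  imports Complex_Main "HOL-Library.Multiset"
begin

text \<open>Symmetric functions in y = (y_0, y_1, ...) as formal power series:
  a series is a coefficient function on exponent vectors (nat => nat).\<close>

type_synonym series = "(nat \<Rightarrow> nat) \<Rightarrow> complex"

definition supp :: "(nat \<Rightarrow> nat) \<Rightarrow> nat set" where
  "supp \<beta> = {i. \<beta> i \<noteq> 0}"

definition mdeg :: "(nat \<Rightarrow> nat) \<Rightarrow> nat" where
  "mdeg \<beta> = sum \<beta> (supp \<beta>)"

definition Lam :: "series set" where
  "Lam = {p. (\<forall>\<beta>. p \<beta> \<noteq> 0 \<longrightarrow> finite (supp \<beta>))
           \<and> (\<exists>d. \<forall>\<beta>. p \<beta> \<noteq> 0 \<longrightarrow> mdeg \<beta> \<le> d)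
           \<and> (\<forall>\<pi> \<beta>. bij \<pi> \<longrightarrow> p (\<beta> \<circ> \<pi>) = p \<beta>)}"

definition partitions :: "nat multiset set" where
  "partitions = {\<mu>. 0 \<notin># \<mu>}"

definition parts :: "(nat \<Rightarrow> nat) \<Rightarrow> nat multiset" where
  "parts \<beta> = image_mset \<beta> (mset_set (supp \<beta>))"

definition msym :: "nat multiset \<Rightarrow> series" where
  "msym \<mu> \<beta> = (if finite (supp \<beta>) \<and> parts \<beta> = \<mu> then 1 else 0)"

text \<open>Representative exponent vector of a partition and coefficient of m_lambda.\<close>
definition mono :: "nat multiset \<Rightarrow> nat \<Rightarrow> nat" where
  "mono \<mu> i = (if i < size \<mu> then sorted_list_of_multiset \<mu> ! i else 0)"

definition coeffP :: "series \<Rightarrow> nat multiset \<Rightarrow> complex" where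
  "coeffP p \<mu> = p (mono \<mu>)"

definition Dop :: "nat \<Rightarrow> series \<Rightarrow> series" where
  "Dop i p = (\<lambda>\<beta>. \<Sum>\<mu>\<in>{\<mu>\<in>partitions. coeffP p \<mu> \<noteq> 0}.
      coeffP p \<mu> * (if i \<in># \<mu> then of_nat (fact i) * msym (\<mu> - {#i#}) \<beta> else 0))"

definition Dlam :: "nat multiset \<Rightarrow> series \<Rightarrow> series" where
  "Dlam \<mu> p = foldr (\<lambda>i q. (\<lambda>\<beta>. Dop i q \<beta> / of_nat (fact i))) (sorted_list_of_multiset \<mu>) p"

text \<open>E^a p (y_0, y_1, ...) = p(a, y_0, y_1, ...).\<close>
definition shiftmon :: "nat \<Rightarrow> (nat \<Rightarrow> nat) \<Rightarrow> nat \<Rightarrow> nat" where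
  "shiftmon k \<beta> = (\<lambda>i. if i = 0 then k else \<beta> (i - 1))"

definition Eop :: "complex \<Rightarrow> series \<Rightarrow> series" where
  "Eop a p = (\<lambda>\<beta>. \<Sum>k\<in>{k. p (shiftmon k \<beta>) \<noteq> 0}. a ^ k * p (shiftmon k \<beta>))"

definition eps :: "series \<Rightarrow> complex" where
  "eps p = p (\<lambda>_. 0)"

definition linear_on_Lam :: "(series \<Rightarrow> series) \<Rightarrow> bool" where
  "linear_on_Lam \<theta> \<longleftrightarrow> (\<forall>p\<in>Lam. \<theta> p \<in> Lam)
     \<and> (\<forall>p\<in>Lam. \<forall>q\<in>Lam. \<theta> (\<lambda>\<beta>. p \<beta> + q \<beta>) = (\<lambda>\<beta>. \<theta> p \<beta> + \<theta> q \<beta>))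
     \<and> (\<forall>c. \<forall>p\<in>Lam. \<theta> (\<lambda>\<beta>. c * p \<beta>) = (\<lambda>\<beta>. c * \<theta> p \<beta>))"

end

theory Submission
  imports Defs "HOL-Library.Infinite_Set"
begin

text \<open>
  For a partition \<open>\<mu>\<close>, the shift \<open>E\<^sup>a m\<^sub>\<mu>\<close> is the polynomial
  \<open>\<Sum>\<^sub>j a\<^sup>j m(\<mu> - j)\<close> in \<open>a\<close>, where \<open>j\<close> ranges over \<open>0\<close> and the parts of \<open>\<mu>\<close>.
  Comparing coefficients of \<open>a\<close> in \<open>E\<^sup>a (\<theta> m\<^sub>\<mu>) = \<theta> (E\<^sup>a m\<^sub>\<mu>)\<close> shows that the
  coefficient of \<open>y\<^sub>0\<^sup>k y\<^sup>\<gamma>\<close> in \<open>\<theta> m\<^sub>\<mu>\<close> is the coefficient of \<open>y\<^sup>\<gamma>\<close> in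
  \<open>\<theta> m(\<mu> - k)\<close> if \<open>k\<close> is \<open>0\<close> or a part of \<open>\<mu>\<close>, and \<open>0\<close> otherwise. Peeling off the
  variables one at a time gives \<open>\<theta> m\<^sub>\<nu> = \<Sum>\<^sub>\<lambda> \<epsilon>(\<theta> m\<^sub>\<lambda>) m(\<nu> - \<lambda>)\<close>, summed over
  the sub-multisets \<open>\<lambda>\<close> of \<open>\<nu>\<close>. Since \<open>D\<^sub>\<lambda> m\<^sub>\<nu> = m(\<nu> - \<lambda>)\<close> for \<open>\<lambda> \<subseteq> \<nu>\<close> and
  \<open>D\<^sub>\<lambda> m\<^sub>\<nu> = 0\<close> otherwise, both sides of the theorem agree on every \<open>m\<^sub>\<nu>\<close>, and
  linearity does the rest.
\<close>

lemma bij_betw_if_image_mset_eq: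
  assumes "finite A" "finite B" "image_mset f (mset_set A) = image_mset g (mset_set B)"
  shows "\<exists>h. bij_betw h A B \<and> (\<forall>x\<in>A. g (h x) = f x)"
  using assms
proof (induction A arbitrary: B rule: finite_induct)
  case empty
  then have "B = {}" by (simp add: mset_set_empty_iff)
  then show ?case by (simp add: bij_betw_def)
next
  case (insert a A)
  have "f a \<in># image_mset g (mset_set B)"
    using insert.prems(2)[symmetric] insert.hyps by simp
  then obtain b where b: "b \<in> B" "g b = f a" using insert.prems(1) by auto
  have "image_mset f (mset_set A) = image_mset g (mset_set (B - {b}))"
    using insert b by (simp add: mset_set.remove[OF insert.prems(1) b(1)])
  then obtain h where h: "bij_betw h A (B - {b})" "\<forall>x\<in>A. g (h x) = f x"
    using insert by blast
  define h' where "h' = (\<lambda>x. if x = a then b else h x)"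
  have "bij_betw h' A (B - {b})"
    by (rule bij_betw_cong[THEN iffD2, OF _ h(1)]) (use insert.hyps(2) in \<open>auto simp: h'_def\<close>)
  moreover have "bij_betw h' {a} {b}" by (simp add: h'_def bij_betw_def)
  ultimately have "bij_betw h' (A \<union> {a}) ((B - {b}) \<union> {b})"
    by (intro bij_betw_combine) auto
  then have "bij_betw h' (insert a A) B" using b(1) by (simp add: insert_absorb)
  moreover have "\<forall>x\<in>insert a A. g (h' x) = f x" using h b insert.hyps(2) by (auto simp: h'_def)
  ultimately show ?case by blast
qed

lemma length_sorted_list_of_multiset: "length (sorted_list_of_multiset \<nu>) = size \<nu>"
  using size_mset[of "sorted_list_of_multiset \<nu>"] by simp

lemma add_mset_eq_iff_member_diff: "add_mset k A = M \<longleftrightarrow> k \<in># M \<and> A = M - {#k#}"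
  by (metis add_mset_remove_trivial insert_DiffM union_single_eq_member)

lemma add_mset_subset_mset_iff: "add_mset x A \<subseteq># M \<longleftrightarrow> A \<subseteq># M \<and> x \<in># M - A"
proof (cases "A \<subseteq># M")
  case True
  then have "add_mset x A \<subseteq># M \<longleftrightarrow> A + {#x#} \<subseteq># A + (M - A)" by simp
  also have "\<dots> \<longleftrightarrow> x \<in># M - A"
    by (simp only: subset_mset.add_le_cancel_left single_subset_iff)
  finally show ?thesis using True by simp
next
  case False
  then show ?thesis by (meson mset_subset_eq_insertD subset_mset.less_imp_le)
qed

lemma finite_multisets_bounded:
  assumes "finite A"
  shows "finite {\<mu>. set_mset \<mu> \<subseteq> A \<and> size \<mu> \<le> n}"
proof (rule finite_subset)
  show "{\<mu>. set_mset \<mu> \<subseteq> A \<and> size \<mu> \<le> n} \<subseteq> (\<Union>k\<le>n. multisets_of_size A k)"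
    by (auto simp: multisets_of_size_def)
  show "finite (\<Union>k\<le>n. multisets_of_size A k)"
    using assms by blast
qed

lemma finite_subset_mset: "finite {\<mu>. \<mu> \<subseteq># \<nu>}"
  by (rule finite_subset[OF _ finite_multisets_bounded[of "set_mset \<nu>" "size \<nu>"]])
    (auto dest: mset_subset_eqD intro: size_mset_mono)

lemma size_le_sum_mset: "0 \<notin># (\<nu>::nat multiset) \<Longrightarrow> size \<nu> \<le> sum_mset \<nu>"
  by (induction \<nu>) auto

lemma member_le_sum_mset: "x \<in># (\<nu>::nat multiset) \<Longrightarrow> x \<le> sum_mset \<nu>"
  by (metis multi_member_split sum_mset.add_mset le_add1)

section \<open>Exponent vectors and their partitions\<close>

lemma supp_comp_bij: "bij \<pi> \<Longrightarrow> supp (\<beta> \<circ> \<pi>) = \<pi> -` supp \<beta>"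
  by (auto simp: supp_def)

lemma parts_comp_bij:
  assumes "bij \<pi>" "finite (supp \<beta>)"
  shows "parts (\<beta> \<circ> \<pi>) = parts \<beta>"
proof -
  have "parts (\<beta> \<circ> \<pi>) = image_mset \<beta> (image_mset \<pi> (mset_set (\<pi> -` supp \<beta>)))"
    by (simp add: parts_def supp_comp_bij[OF assms(1)] multiset.map_comp)
  also have "image_mset \<pi> (mset_set (\<pi> -` supp \<beta>)) = mset_set (\<pi> ` (\<pi> -` supp \<beta>))"
    using assms by (intro image_mset_mset_set) (auto simp: bij_def inj_on_def)
  also have "\<pi> ` (\<pi> -` supp \<beta>) = supp \<beta>"
    using assms(1) by (simp add: bij_def surj_image_vimage_eq)
  finally show ?thesis by (simp add: parts_def comp_def)
qed

lemma mdeg_eq_sum_mset_parts: "finite (supp \<beta>) \<Longrightarrow> mdeg \<beta> = sum_mset (parts \<beta>)"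
  by (simp add: mdeg_def parts_def sum_unfold_sum_mset)

lemma parts_in_partitions: "parts \<beta> \<in> partitions"
  by (cases "finite (supp \<beta>)") (auto simp: partitions_def parts_def supp_def)

lemma partitions_subset_mset: "\<nu> \<in> partitions \<Longrightarrow> \<mu> \<subseteq># \<nu> \<Longrightarrow> \<mu> \<in> partitions"
  by (auto simp: partitions_def dest: mset_subset_eqD)

lemma partitions_diff: "\<nu> \<in> partitions \<Longrightarrow> \<nu> - \<mu> \<in> partitions"
  by (auto simp: partitions_def dest: in_diffD)

lemma supp_mono:
  assumes "\<nu> \<in> partitions"
  shows "supp (mono \<nu>) = {..<size \<nu>}"
proof -
  have "sorted_list_of_multiset \<nu> ! i \<noteq> 0" if "i < size \<nu>" for i
  proof -
    have "sorted_list_of_multiset \<nu> ! i \<in># \<nu>"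
      using that nth_mem[of i "sorted_list_of_multiset \<nu>"]
      by (simp add: length_sorted_list_of_multiset)
    with assms show ?thesis unfolding partitions_def by (cases "sorted_list_of_multiset \<nu> ! i") auto
  qed
  then show ?thesis unfolding supp_def mono_def by auto
qed

lemma parts_mono:
  assumes "\<nu> \<in> partitions"
  shows "parts (mono \<nu>) = \<nu>"
proof -
  let ?xs = "sorted_list_of_multiset \<nu>"
  have "parts (mono \<nu>) = mset (map (mono \<nu>) [0..<length ?xs])"
    by (simp add: parts_def supp_mono[OF assms] length_sorted_list_of_multiset
        mset_set_upto_eq_mset_upto)
  also have "map (mono \<nu>) [0..<length ?xs] = map ((!) ?xs) [0..<length ?xs]"
    by (simp add: mono_def length_sorted_list_of_multiset)
  also have "\<dots> = ?xs" by (rule map_nth)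
  finally show ?thesis by simp
qed

lemma finite_partitions_sum_le: "finite {\<nu>\<in>partitions. sum_mset \<nu> \<le> d}"
proof (rule finite_subset[OF _ finite_multisets_bounded[of "{..d}" d]])
  show "{\<nu>\<in>partitions. sum_mset \<nu> \<le> d} \<subseteq> {\<mu>. set_mset \<mu> \<subseteq> {..d} \<and> size \<mu> \<le> d}"
  proof
    fix \<nu> assume "\<nu> \<in> {\<nu>\<in>partitions. sum_mset \<nu> \<le> d}"
    then have "0 \<notin># \<nu>" "sum_mset \<nu> \<le> d" by (auto simp: partitions_def)
    then show "\<nu> \<in> {\<mu>. set_mset \<mu> \<subseteq> {..d} \<and> size \<mu> \<le> d}"
      using member_le_sum_mset[of _ \<nu>] size_le_sum_mset[of \<nu>] by (auto intro: order_trans)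
  qed
qed simp

lemma msym_in_Lam: "msym \<mu> \<in> Lam"
  unfolding Lam_def
proof (intro CollectI conjI allI impI)
  show "\<exists>d. \<forall>\<beta>. msym \<mu> \<beta> \<noteq> 0 \<longrightarrow> mdeg \<beta> \<le> d"
    by (rule exI[of _ "sum_mset \<mu>"]) (auto simp: msym_def mdeg_eq_sum_mset_parts split: if_splits)
next
  fix \<pi> \<beta> :: "nat \<Rightarrow> nat"
  assume "bij \<pi>"
  then show "msym \<mu> (\<beta> \<circ> \<pi>) = msym \<mu> \<beta>"
    by (auto simp: msym_def supp_comp_bij finite_vimage_iff parts_comp_bij)
qed (auto simp: msym_def split: if_splits)

text \<open>Two exponent vectors with the same multiset of nonzero entries differ by a
  permutation of the variables: match the supports by the given bijection and the
  (infinite) complements by their enumerations.\<close>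

lemma Lam_eq_if_parts_eq:
  assumes "p \<in> Lam" "finite (supp \<beta>)" "finite (supp \<beta>')" "parts \<beta>' = parts \<beta>"
  shows "p \<beta>' = p \<beta>"
proof -
  obtain h where h: "bij_betw h (supp \<beta>') (supp \<beta>)" "\<forall>x\<in>supp \<beta>'. \<beta> (h x) = \<beta>' x"
    using bij_betw_if_image_mset_eq[OF assms(3,2)] assms(4) unfolding parts_def by metis
  have infinite_compl: "infinite (- supp \<beta>')" "infinite (- supp \<beta>)"
    using assms(2,3) by (metis finite_Un infinite_UNIV_nat sup_compl_top)+
  define k where "k = enumerate (- supp \<beta>) \<circ> the_inv_into UNIV (enumerate (- supp \<beta>'))"
  have "bij_betw (the_inv_into UNIV (enumerate (- supp \<beta>'))) (- supp \<beta>') UNIV"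
    using bij_enumerate[OF infinite_compl(1)] by (rule bij_betw_the_inv_into)
  then have k: "bij_betw k (- supp \<beta>') (- supp \<beta>)"
    unfolding k_def using bij_enumerate[OF infinite_compl(2)] by (rule bij_betw_trans)
  define \<pi> where "\<pi> = (\<lambda>x. if x \<in> supp \<beta>' then h x else k x)"
  have "bij_betw \<pi> (supp \<beta>' \<union> - supp \<beta>') (supp \<beta> \<union> - supp \<beta>)"
    by (rule bij_betw_combine) (use h(1) k in \<open>auto simp: \<pi>_def intro: bij_betw_cong[THEN iffD1]\<close>)
  then have "bij \<pi>" by simp
  moreover have "\<beta>' = \<beta> \<circ> \<pi>"
  proof
    fix x
    show "\<beta>' x = (\<beta> \<circ> \<pi>) x"
    proof (cases "x \<in> supp \<beta>'")
      case True
      then show ?thesis using h(2) by (simp add: \<pi>_def)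
    next
      case False
      then have "k x \<notin> supp \<beta>" using k by (auto simp: bij_betw_def)
      then show ?thesis using False by (simp add: \<pi>_def supp_def)
    qed
  qed
  ultimately show ?thesis using assms(1) unfolding Lam_def by auto
qed

lemma Lam_add:
  assumes "p \<in> Lam" "q \<in> Lam"
  shows "(\<lambda>\<beta>. p \<beta> + q \<beta>) \<in> Lam"
proof -
  obtain d1 d2 where "\<And>\<beta>. p \<beta> \<noteq> 0 \<Longrightarrow> mdeg \<beta> \<le> d1" "\<And>\<beta>. q \<beta> \<noteq> 0 \<Longrightarrow> mdeg \<beta> \<le> d2"
    using assms by (auto simp: Lam_def)
  then have "\<And>\<beta>. p \<beta> + q \<beta> \<noteq> 0 \<Longrightarrow> mdeg \<beta> \<le> max d1 d2"
    by (metis add.right_neutral add_0 max.coboundedI1 max.coboundedI2)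
  moreover have "\<And>\<beta>. p \<beta> + q \<beta> \<noteq> 0 \<Longrightarrow> finite (supp \<beta>)"
    using assms unfolding Lam_def by (metis (mono_tags, lifting) add_0 add.right_neutral mem_Collect_eq)
  ultimately show ?thesis using assms unfolding Lam_def by auto
qed

lemma Lam_scale: "p \<in> Lam \<Longrightarrow> (\<lambda>\<beta>. c * p \<beta>) \<in> Lam"
  unfolding Lam_def by auto

lemma Lam_zero: "(\<lambda>\<beta>. 0) \<in> Lam"
  unfolding Lam_def by auto

lemma Lam_sum:
  "finite J \<Longrightarrow> (\<And>j. j \<in> J \<Longrightarrow> q j \<in> Lam) \<Longrightarrow> (\<lambda>\<beta>. \<Sum>j\<in>J. c j * q j \<beta>) \<in> Lam"
proof (induction J rule: finite_induct)
  case empty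
  then show ?case by (simp add: Lam_zero)
next
  case (insert x F)
  then show ?case using Lam_add[OF Lam_scale[of "q x" "c x"] insert.IH] by simp
qed

lemma linear_on_Lam_in_Lam: "linear_on_Lam \<theta> \<Longrightarrow> p \<in> Lam \<Longrightarrow> \<theta> p \<in> Lam"
  unfolding linear_on_Lam_def by blast

lemma linear_on_Lam_zero:
  assumes "linear_on_Lam \<theta>"
  shows "\<theta> (\<lambda>\<beta>. 0) = (\<lambda>\<beta>. 0)"
proof -
  have "\<And>c p. p \<in> Lam \<Longrightarrow> \<theta> (\<lambda>\<beta>. c * p \<beta>) = (\<lambda>\<beta>. c * \<theta> p \<beta>)"
    using assms unfolding linear_on_Lam_def by blast
  from this[OF Lam_zero, of 0] show ?thesis by simp
qed

lemma linear_on_Lam_sum: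
  assumes "linear_on_Lam \<theta>" "finite J" "\<And>j. j \<in> J \<Longrightarrow> q j \<in> Lam"
  shows "\<theta> (\<lambda>\<beta>. \<Sum>j\<in>J. c j * q j \<beta>) = (\<lambda>\<beta>. \<Sum>j\<in>J. c j * \<theta> (q j) \<beta>)"
  using assms(2,3)
proof (induction J rule: finite_induct)
  case empty
  then show ?case using linear_on_Lam_zero[OF assms(1)] by simp
next
  case (insert x F)
  have "\<theta> (\<lambda>\<beta>. \<Sum>j\<in>insert x F. c j * q j \<beta>) = \<theta> (\<lambda>\<beta>. c x * q x \<beta> + (\<Sum>j\<in>F. c j * q j \<beta>))"
    using insert.hyps by simp
  also have "\<dots> = (\<lambda>\<beta>. \<theta> (\<lambda>\<beta>. c x * q x \<beta>) \<beta> + \<theta> (\<lambda>\<beta>. \<Sum>j\<in>F. c j * q j \<beta>) \<beta>)"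
    using assms(1) Lam_scale[of "q x" "c x"] Lam_sum[of F q c] insert
    unfolding linear_on_Lam_def by auto
  also have "\<dots> = (\<lambda>\<beta>. c x * \<theta> (q x) \<beta> + (\<Sum>j\<in>F. c j * \<theta> (q j) \<beta>))"
    using assms(1) insert unfolding linear_on_Lam_def by auto
  finally show ?case using insert.hyps by simp
qed

section \<open>Expansion in monomial symmetric functions\<close>

definition coeff_support :: "series \<Rightarrow> nat multiset set" where
  "coeff_support p = {\<nu>\<in>partitions. coeffP p \<nu> \<noteq> 0}"

lemma finite_coeff_support:
  assumes "p \<in> Lam"
  shows "finite (coeff_support p)"
proof -
  obtain d where d: "\<And>\<beta>. p \<beta> \<noteq> 0 \<Longrightarrow> mdeg \<beta> \<le> d"
    using assms unfolding Lam_def by auto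
  have "sum_mset \<nu> \<le> d" if "\<nu> \<in> coeff_support p" for \<nu>
  proof -
    have "\<nu> \<in> partitions" "p (mono \<nu>) \<noteq> 0"
      using that by (auto simp: coeff_support_def coeffP_def)
    then show ?thesis
      using d[of "mono \<nu>"] by (simp add: mdeg_eq_sum_mset_parts parts_mono supp_mono)
  qed
  then have "coeff_support p \<subseteq> {\<nu>\<in>partitions. sum_mset \<nu> \<le> d}"
    by (auto simp: coeff_support_def)
  then show ?thesis using finite_partitions_sum_le finite_subset by blast
qed

lemma coeffP_parts:
  assumes "p \<in> Lam" "finite (supp \<beta>)"
  shows "coeffP p (parts \<beta>) = p \<beta>"
  unfolding coeffP_def using parts_in_partitions
  by (intro Lam_eq_if_parts_eq[OF assms]) (auto simp: parts_mono supp_mono)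

lemma Lam_monomial_expansion:
  assumes "p \<in> Lam"
  shows "p = (\<lambda>\<beta>. \<Sum>\<nu>\<in>coeff_support p. coeffP p \<nu> * msym \<nu> \<beta>)"
proof
  fix \<beta>
  show "p \<beta> = (\<Sum>\<nu>\<in>coeff_support p. coeffP p \<nu> * msym \<nu> \<beta>)"
  proof (cases "finite (supp \<beta>)")
    case False
    then show ?thesis using assms by (auto simp: Lam_def msym_def)
  next
    case True
    have "(\<Sum>\<nu>\<in>coeff_support p. coeffP p \<nu> * msym \<nu> \<beta>)
        = (\<Sum>\<nu>\<in>coeff_support p. if \<nu> = parts \<beta> then coeffP p \<nu> else 0)"
      using True by (intro sum.cong) (auto simp: msym_def)
    also have "\<dots> = (if parts \<beta> \<in> coeff_support p then coeffP p (parts \<beta>) else 0)"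
      using finite_coeff_support[OF assms] by (simp add: sum.delta')
    also have "\<dots> = p \<beta>"
      using coeffP_parts[OF assms True] parts_in_partitions by (auto simp: coeff_support_def)
    finally show ?thesis by simp
  qed
qed

lemma msym_mono: "\<nu> \<in> partitions \<Longrightarrow> msym \<mu> (mono \<nu>) = (if \<mu> = \<nu> then 1 else 0)"
  by (auto simp: msym_def supp_mono parts_mono)

lemma coeffP_msym_sum:
  assumes "finite J" "\<nu> \<in> partitions"
  shows "coeffP (\<lambda>\<beta>. \<Sum>j\<in>J. c j * msym (f j) \<beta>) \<nu> = (\<Sum>j\<in>{j\<in>J. f j = \<nu>}. c j)"
proof -
  have "coeffP (\<lambda>\<beta>. \<Sum>j\<in>J. c j * msym (f j) \<beta>) \<nu> = (\<Sum>j\<in>J. if f j = \<nu> then c j else 0)"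
    unfolding coeffP_def using msym_mono[OF assms(2)] by (intro sum.cong) auto
  also have "\<dots> = (\<Sum>j\<in>{j\<in>J. f j = \<nu>}. c j)"
    using assms(1) by (simp add: sum.inter_filter)
  finally show ?thesis .
qed

section \<open>The operators \<open>D\<^sub>\<lambda>\<close> on monomial symmetric functions\<close>

text \<open>\<^const>\<open>Dop\<close> is defined through the coefficients of its argument, so it is computed
  here on arbitrary finite combinations of monomials, with repetitions allowed.\<close>

lemma Dop_msym_sum:
  assumes "finite J" "\<And>j. j \<in> J \<Longrightarrow> f j \<in> partitions"
  shows "Dop i (\<lambda>\<beta>. \<Sum>j\<in>J. c j * msym (f j) \<beta>) =
     (\<lambda>\<beta>. \<Sum>j\<in>J. c j * (if i \<in># f j then of_nat (fact i) * msym (f j - {#i#}) \<beta> else 0))"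
proof
  fix \<beta>
  let ?q = "\<lambda>\<beta>. \<Sum>j\<in>J. c j * msym (f j) \<beta>"
  let ?g = "\<lambda>\<nu>. if i \<in># \<nu> then of_nat (fact i) * msym (\<nu> - {#i#}) \<beta> else 0"
  have coeff: "coeffP ?q \<nu> = (\<Sum>j\<in>{j\<in>J. f j = \<nu>}. c j)" if "\<nu> \<in> partitions" for \<nu>
    using coeffP_msym_sum[OF assms(1) that] .
  have "{\<nu>\<in>partitions. coeffP ?q \<nu> \<noteq> 0} \<subseteq> f ` J"
  proof
    fix \<nu> assume "\<nu> \<in> {\<nu>\<in>partitions. coeffP ?q \<nu> \<noteq> 0}"
    then have "{j\<in>J. f j = \<nu>} \<noteq> {}" using coeff by fastforce
    then show "\<nu> \<in> f ` J" by blast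
  qed
  then have "Dop i ?q \<beta> = (\<Sum>\<nu>\<in>f ` J. coeffP ?q \<nu> * ?g \<nu>)"
    unfolding Dop_def using assms by (intro sum.mono_neutral_left) auto
  also have "\<dots> = (\<Sum>\<nu>\<in>f ` J. \<Sum>j\<in>{j\<in>J. f j = \<nu>}. c j * ?g (f j))"
    using assms coeff by (intro sum.cong refl) (auto simp: sum_distrib_right)
  also have "\<dots> = (\<Sum>j\<in>J. c j * ?g (f j))"
    using assms(1) by (intro sum.group) auto
  finally show "Dop i ?q \<beta> = (\<Sum>j\<in>J. c j * ?g (f j))" .
qed

lemma foldr_Dop_msym_sum:
  assumes "finite J" "\<And>j. j \<in> J \<Longrightarrow> f j \<in> partitions"
  shows "foldr (\<lambda>i q. (\<lambda>\<beta>. Dop i q \<beta> / of_nat (fact i))) xs (\<lambda>\<beta>. \<Sum>j\<in>J. c j * msym (f j) \<beta>) =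
     (\<lambda>\<beta>. \<Sum>j\<in>J. (if mset xs \<subseteq># f j then c j else 0) * msym (f j - mset xs) \<beta>)"
proof (induction xs)
  case Nil
  then show ?case by simp
next
  case (Cons x xs)
  let ?c = "\<lambda>j. if mset xs \<subseteq># f j then c j else 0"
  have "foldr (\<lambda>i q. (\<lambda>\<beta>. Dop i q \<beta> / of_nat (fact i))) (x # xs) (\<lambda>\<beta>. \<Sum>j\<in>J. c j * msym (f j) \<beta>)
     = (\<lambda>\<beta>. Dop x (\<lambda>\<beta>. \<Sum>j\<in>J. ?c j * msym (f j - mset xs) \<beta>) \<beta> / of_nat (fact x))"
    using Cons by simp
  also have "\<dots> = (\<lambda>\<beta>. \<Sum>j\<in>J. (if x \<in># f j - mset xs then ?c j else 0) * msym (f j - mset xs - {#x#}) \<beta>)"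
    by (subst Dop_msym_sum) (use assms partitions_diff in \<open>auto simp: sum_divide_distrib intro!: sum.cong\<close>)
  also have "\<dots> = (\<lambda>\<beta>. \<Sum>j\<in>J. (if mset (x # xs) \<subseteq># f j then c j else 0) * msym (f j - mset (x # xs)) \<beta>)"
    by (intro ext sum.cong refl) (simp add: add_mset_subset_mset_iff)
  finally show ?case .
qed

lemma Dlam_monomial_expansion:
  assumes "p \<in> Lam"
  shows "Dlam \<mu> p =
    (\<lambda>\<beta>. \<Sum>\<nu>\<in>coeff_support p. (if \<mu> \<subseteq># \<nu> then coeffP p \<nu> else 0) * msym (\<nu> - \<mu>) \<beta>)"
proof -
  have "Dlam \<mu> p = Dlam \<mu> (\<lambda>\<beta>. \<Sum>\<nu>\<in>coeff_support p. coeffP p \<nu> * msym (id \<nu>) \<beta>)"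
    using Lam_monomial_expansion[OF assms] by simp
  also have "\<dots> = (\<lambda>\<beta>. \<Sum>\<nu>\<in>coeff_support p. (if \<mu> \<subseteq># \<nu> then coeffP p \<nu> else 0) * msym (\<nu> - \<mu>) \<beta>)"
    unfolding Dlam_def using finite_coeff_support[OF assms]
    by (subst foldr_Dop_msym_sum) (auto simp: coeff_support_def)
  finally show ?thesis .
qed

lemma Dlam_nonzero_imp_subset_mset:
  assumes "p \<in> Lam" "Dlam \<mu> p \<noteq> (\<lambda>_. 0)"
  obtains \<nu> where "\<nu> \<in> coeff_support p" "\<mu> \<subseteq># \<nu>"
proof -
  obtain \<beta> where "Dlam \<mu> p \<beta> \<noteq> 0" using assms(2) by blast
  then have "(\<Sum>\<nu>\<in>coeff_support p. (if \<mu> \<subseteq># \<nu> then coeffP p \<nu> else 0) * msym (\<nu> - \<mu>) \<beta>) \<noteq> 0"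
    by (simp add: Dlam_monomial_expansion[OF assms(1)])
  then obtain \<nu> where "\<nu> \<in> coeff_support p"
      "(if \<mu> \<subseteq># \<nu> then coeffP p \<nu> else 0) * msym (\<nu> - \<mu>) \<beta> \<noteq> 0"
    by (meson sum.neutral)
  with that show ?thesis by (simp split: if_splits)
qed

lemma supp_shiftmon: "supp (shiftmon k \<gamma>) = (if k = 0 then {} else {0}) \<union> Suc ` supp \<gamma>"
proof (rule set_eqI)
  fix i
  show "i \<in> supp (shiftmon k \<gamma>) \<longleftrightarrow> i \<in> (if k = 0 then {} else {0}) \<union> Suc ` supp \<gamma>"
    by (cases i) (auto simp: supp_def shiftmon_def)
qed

lemma finite_supp_shiftmon_iff: "finite (supp (shiftmon k \<gamma>)) \<longleftrightarrow> finite (supp \<gamma>)"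
  by (simp add: supp_shiftmon finite_image_iff)

lemma parts_shiftmon:
  assumes "finite (supp \<gamma>)"
  shows "parts (shiftmon k \<gamma>) = (if k = 0 then {#} else {#k#}) + parts \<gamma>"
proof -
  have tail: "image_mset (shiftmon k \<gamma>) (mset_set (Suc ` supp \<gamma>)) = parts \<gamma>"
    by (simp add: image_mset_mset_set[symmetric] multiset.map_comp comp_def shiftmon_def parts_def)
  show ?thesis
  proof (cases "k = 0")
    case True
    then show ?thesis using tail by (simp add: parts_def supp_shiftmon)
  next
    case False
    have "mset_set (insert 0 (Suc ` supp \<gamma>)) = add_mset 0 (mset_set (Suc ` supp \<gamma>))"
      using assms by auto
    then have "parts (shiftmon k \<gamma>) =
        image_mset (shiftmon k \<gamma>) (add_mset 0 (mset_set (Suc ` supp \<gamma>)))"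
      using False by (simp add: parts_def supp_shiftmon)
    then show ?thesis using False tail by (simp add: shiftmon_def)
  qed
qed

lemma shiftmon_head_tail: "\<beta> = shiftmon (\<beta> 0) (\<lambda>i. \<beta> (Suc i))"
  by (auto simp: shiftmon_def fun_eq_iff)

lemma Lam_shiftmon_bounded:
  assumes "q \<in> Lam"
  obtains d where "\<And>k \<gamma>. q (shiftmon k \<gamma>) \<noteq> 0 \<Longrightarrow> k \<le> d"
proof -
  obtain d where d: "\<And>\<beta>. q \<beta> \<noteq> 0 \<Longrightarrow> mdeg \<beta> \<le> d"
    and fin: "\<And>\<beta>. q \<beta> \<noteq> 0 \<Longrightarrow> finite (supp \<beta>)"
    using assms unfolding Lam_def by auto
  have "k \<le> d" if "q (shiftmon k \<gamma>) \<noteq> 0" for k \<gamma>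
  proof -
    have "finite (supp \<gamma>)" using fin[OF that] by (simp add: finite_supp_shiftmon_iff)
    then have "k \<le> mdeg (shiftmon k \<gamma>)"
      by (simp add: mdeg_eq_sum_mset_parts finite_supp_shiftmon_iff parts_shiftmon)
    then show ?thesis using d[OF that] by simp
  qed
  then show ?thesis using that by blast
qed

lemma Eop_eq_polynomial:
  assumes "\<And>k. q (shiftmon k \<gamma>) \<noteq> 0 \<Longrightarrow> k \<le> N"
  shows "Eop a q \<gamma> = (\<Sum>k\<le>N. q (shiftmon k \<gamma>) * a ^ k)"
proof -
  have "Eop a q \<gamma> = (\<Sum>k\<le>N. a ^ k * q (shiftmon k \<gamma>))"
    unfolding Eop_def using assms by (intro sum.mono_neutral_left) auto
  then show ?thesis by (simp add: mult.commute)
qed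

lemma Eop_msym:
  assumes "\<mu> \<in> partitions"
  shows "Eop a (msym \<mu>) = (\<lambda>\<gamma>. \<Sum>j\<in>insert 0 (set_mset \<mu>). a ^ j * msym (\<mu> - {#j#}) \<gamma>)"
proof
  fix \<gamma>
  let ?I = "insert 0 (set_mset \<mu>)"
  show "Eop a (msym \<mu>) \<gamma> = (\<Sum>j\<in>?I. a ^ j * msym (\<mu> - {#j#}) \<gamma>)"
  proof (cases "finite (supp \<gamma>)")
    case False
    then show ?thesis by (simp add: Eop_def msym_def finite_supp_shiftmon_iff)
  next
    case True
    have "0 \<notin># \<mu>" using assms by (simp add: partitions_def)
    then have "msym \<mu> (shiftmon k \<gamma>) = (if k \<in> ?I \<and> parts \<gamma> = \<mu> - {#k#} then 1 else 0)" for k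
      using True
      by (auto simp: msym_def finite_supp_shiftmon_iff parts_shiftmon add_mset_eq_iff_member_diff
          diff_single_trivial)
    then have "Eop a (msym \<mu>) \<gamma> = (\<Sum>j\<in>{j\<in>?I. parts \<gamma> = \<mu> - {#j#}}. a ^ j)"
      unfolding Eop_def by (intro sum.cong) auto
    also have "\<dots> = (\<Sum>j\<in>?I. a ^ j * msym (\<mu> - {#j#}) \<gamma>)"
      using True by (simp add: sum.inter_filter[symmetric] msym_def if_distrib cong: if_cong)
    finally show ?thesis .
  qed
qed

section \<open>Shift-invariant operators\<close>

locale shift_invariant =
  fixes \<theta> :: "series \<Rightarrow> series"
  assumes linear: "linear_on_Lam \<theta>"
    and Eop_commute: "\<And>a p. p \<in> Lam \<Longrightarrow> Eop a (\<theta> p) = \<theta> (Eop a p)"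
begin

lemma msym_shiftmon:
  assumes "\<mu> \<in> partitions"
  shows "\<theta> (msym \<mu>) (shiftmon k \<gamma>) =
    (if k \<in> insert 0 (set_mset \<mu>) then \<theta> (msym (\<mu> - {#k#})) \<gamma> else 0)"
proof -
  let ?I = "insert 0 (set_mset \<mu>)"
  let ?T = "\<lambda>j. if j \<in> ?I then \<theta> (msym (\<mu> - {#j#})) \<gamma> else 0"
  obtain d where d: "\<And>k \<gamma>. \<theta> (msym \<mu>) (shiftmon k \<gamma>) \<noteq> 0 \<Longrightarrow> k \<le> d"
    using Lam_shiftmon_bounded[OF linear_on_Lam_in_Lam[OF linear msym_in_Lam]] by blast
  define N where "N = d + sum_mset \<mu> + k"
  have "?I \<subseteq> {..N}"
    by (auto simp: N_def dest!: member_le_sum_mset)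
  have "(\<Sum>i\<le>N. \<theta> (msym \<mu>) (shiftmon i \<gamma>) * a ^ i) = (\<Sum>i\<le>N. ?T i * a ^ i)" for a
  proof -
    have "(\<Sum>i\<le>N. \<theta> (msym \<mu>) (shiftmon i \<gamma>) * a ^ i) = Eop a (\<theta> (msym \<mu>)) \<gamma>"
      by (rule Eop_eq_polynomial[symmetric]) (use d in \<open>force simp: N_def\<close>)
    also have "\<dots> = \<theta> (Eop a (msym \<mu>)) \<gamma>"
      by (simp add: Eop_commute msym_in_Lam)
    also have "\<dots> = (\<Sum>j\<in>?I. a ^ j * \<theta> (msym (\<mu> - {#j#})) \<gamma>)"
      by (simp add: Eop_msym[OF assms] linear_on_Lam_sum[OF linear] msym_in_Lam)
    also have "\<dots> = (\<Sum>i\<le>N. ?T i * a ^ i)"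
      using \<open>?I \<subseteq> {..N}\<close> by (intro sum.mono_neutral_cong_left) auto
    finally show ?thesis .
  qed
  then have "\<forall>i\<le>N. \<theta> (msym \<mu>) (shiftmon i \<gamma>) = ?T i"
    using polyfun_eq_coeffs[of "\<lambda>i. \<theta> (msym \<mu>) (shiftmon i \<gamma>)" N ?T] by blast
  then show ?thesis by (simp add: N_def)
qed

lemma msym_eq_eps_bounded:
  assumes "\<And>i. n \<le> i \<Longrightarrow> \<beta> i = 0" "\<mu> \<in> partitions"
  shows "\<theta> (msym \<mu>) \<beta> = (if parts \<beta> \<subseteq># \<mu> then eps (\<theta> (msym (\<mu> - parts \<beta>))) else 0)"
  using assms
proof (induction n arbitrary: \<beta> \<mu>)
  case 0
  then have "\<beta> = (\<lambda>_. 0)" by auto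
  moreover have "parts (\<lambda>_. 0) = {#}" by (simp add: parts_def supp_def)
  ultimately show ?case by (simp add: eps_def)
next
  case (Suc n)
  define k where "k = \<beta> 0"
  define \<gamma> where "\<gamma> = (\<lambda>i. \<beta> (Suc i))"
  have \<beta>: "\<beta> = shiftmon k \<gamma>"
    unfolding k_def \<gamma>_def by (rule shiftmon_head_tail)
  have \<gamma>_vanishes: "\<And>i. n \<le> i \<Longrightarrow> \<gamma> i = 0" using Suc.prems(1) by (simp add: \<gamma>_def)
  then have "supp \<gamma> \<subseteq> {..<n}" unfolding supp_def using not_less by blast
  then have parts_\<beta>: "parts \<beta> = (if k = 0 then {#} else {#k#}) + parts \<gamma>"
    using \<beta> parts_shiftmon finite_subset by blast
  have \<mu>_no_zero: "0 \<notin># \<mu>" using Suc.prems(2) by (simp add: partitions_def)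
  have shift: "\<theta> (msym \<mu>) \<beta> =
      (if k \<in> insert 0 (set_mset \<mu>) then \<theta> (msym (\<mu> - {#k#})) \<gamma> else 0)"
    unfolding \<beta> by (rule msym_shiftmon[OF Suc.prems(2)])
  consider "k = 0" | "k \<noteq> 0" "k \<in># \<mu>" | "k \<noteq> 0" "k \<notin># \<mu>" by blast
  then show ?case
  proof cases
    case 1
    then show ?thesis
      using shift parts_\<beta> Suc.IH[OF \<gamma>_vanishes Suc.prems(2)] \<mu>_no_zero
      by (simp add: diff_single_trivial)
  next
    case 2
    have "parts \<gamma> \<subseteq># \<mu> - {#k#} \<longleftrightarrow> add_mset k (parts \<gamma>) \<subseteq># \<mu>"
      using 2 by (simp add: insert_subset_eq_iff)
    then show ?thesis
      using 2 shift parts_\<beta> Suc.IH[OF \<gamma>_vanishes partitions_diff[OF Suc.prems(2)]] by simp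
  next
    case 3
    then have "\<not> add_mset k (parts \<gamma>) \<subseteq># \<mu>" by (simp add: insert_subset_eq_iff)
    then show ?thesis using 3 shift parts_\<beta> by simp
  qed
qed

lemma msym_eq_eps:
  assumes "\<mu> \<in> partitions"
  shows "\<theta> (msym \<mu>) \<beta> =
    (if finite (supp \<beta>) \<and> parts \<beta> \<subseteq># \<mu> then eps (\<theta> (msym (\<mu> - parts \<beta>))) else 0)"
proof (cases "finite (supp \<beta>)")
  case True
  then obtain n where "supp \<beta> \<subseteq> {..<n}" using finite_nat_bounded by blast
  then have "\<And>i. n \<le> i \<Longrightarrow> \<beta> i = 0" by (auto simp: supp_def)
  from msym_eq_eps_bounded[OF this assms] show ?thesis using True by simp
next
  case False
  have "\<theta> (msym \<mu>) \<in> Lam" by (rule linear_on_Lam_in_Lam[OF linear msym_in_Lam])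
  then show ?thesis using False unfolding Lam_def by auto
qed

lemma msym_expansion:
  assumes "\<nu> \<in> partitions"
  shows "\<theta> (msym \<nu>) = (\<lambda>\<beta>. \<Sum>\<mu>\<in>{\<mu>. \<mu> \<subseteq># \<nu>}. eps (\<theta> (msym \<mu>)) * msym (\<nu> - \<mu>) \<beta>)"
proof
  fix \<beta>
  show "\<theta> (msym \<nu>) \<beta> = (\<Sum>\<mu>\<in>{\<mu>. \<mu> \<subseteq># \<nu>}. eps (\<theta> (msym \<mu>)) * msym (\<nu> - \<mu>) \<beta>)"
  proof (cases "finite (supp \<beta>)")
    case False
    then show ?thesis by (simp add: msym_eq_eps[OF assms] msym_def)
  next
    case True
    have "(\<Sum>\<mu>\<in>{\<mu>. \<mu> \<subseteq># \<nu>}. eps (\<theta> (msym \<mu>)) * msym (\<nu> - \<mu>) \<beta>)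
        = (\<Sum>\<mu>\<in>{\<mu>. \<mu> \<subseteq># \<nu>}. if \<mu> = \<nu> - parts \<beta> \<and> parts \<beta> \<subseteq># \<nu> then eps (\<theta> (msym \<mu>)) else 0)"
      using True by (intro sum.cong refl) (auto simp: msym_def subset_mset.diff_diff_right)
    also have "\<dots> = (if parts \<beta> \<subseteq># \<nu> then eps (\<theta> (msym (\<nu> - parts \<beta>))) else 0)"
      using finite_subset_mset[of \<nu>] by (simp add: sum.delta' if_distrib cong: if_cong)
    also have "\<dots> = \<theta> (msym \<nu>) \<beta>" by (simp add: msym_eq_eps[OF assms] True)
    finally show ?thesis by simp
  qed
qed

lemma eq_sum_eps_Dlam:
  assumes p: "p \<in> Lam" and M: "finite M" "\<And>\<nu> \<mu>. \<nu> \<in> coeff_support p \<Longrightarrow> \<mu> \<subseteq># \<nu> \<Longrightarrow> \<mu> \<in> M"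
  shows "\<theta> p \<beta> = (\<Sum>\<mu>\<in>M. eps (\<theta> (msym \<mu>)) * Dlam \<mu> p \<beta>)"
proof -
  let ?P = "coeff_support p" and ?c = "coeffP p" and ?e = "\<lambda>\<mu>. eps (\<theta> (msym \<mu>))"
  have "\<theta> p \<beta> = \<theta> (\<lambda>\<beta>. \<Sum>\<nu>\<in>?P. ?c \<nu> * msym \<nu> \<beta>) \<beta>"
    using arg_cong[OF Lam_monomial_expansion[OF p], of "\<lambda>q. \<theta> q \<beta>"] .
  also have "\<dots> = (\<Sum>\<nu>\<in>?P. ?c \<nu> * \<theta> (msym \<nu>) \<beta>)"
    by (simp add: linear_on_Lam_sum[OF linear finite_coeff_support[OF p]] msym_in_Lam)
  also have "\<dots> = (\<Sum>\<nu>\<in>?P. \<Sum>\<mu>\<in>M. if \<mu> \<subseteq># \<nu> then ?c \<nu> * (?e \<mu> * msym (\<nu> - \<mu>) \<beta>) else 0)"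
  proof (intro sum.cong refl)
    fix \<nu> assume \<nu>: "\<nu> \<in> ?P"
    let ?g = "\<lambda>\<mu>. ?c \<nu> * (?e \<mu> * msym (\<nu> - \<mu>) \<beta>)"
    have "?c \<nu> * \<theta> (msym \<nu>) \<beta> = (\<Sum>\<mu>\<in>{\<mu>. \<mu> \<subseteq># \<nu>}. ?g \<mu>)"
      using \<nu> by (simp add: coeff_support_def msym_expansion sum_distrib_left)
    also have "{\<mu>. \<mu> \<subseteq># \<nu>} = {\<mu>\<in>M. \<mu> \<subseteq># \<nu>}" using \<nu> M(2) by blast
    also have "(\<Sum>\<mu>\<in>{\<mu>\<in>M. \<mu> \<subseteq># \<nu>}. ?g \<mu>) = (\<Sum>\<mu>\<in>M. if \<mu> \<subseteq># \<nu> then ?g \<mu> else 0)"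
      using M(1) by (rule sum.inter_filter)
    finally show "?c \<nu> * \<theta> (msym \<nu>) \<beta> = (\<Sum>\<mu>\<in>M. if \<mu> \<subseteq># \<nu> then ?g \<mu> else 0)" .
  qed
  also have "\<dots> = (\<Sum>\<mu>\<in>M. ?e \<mu> * (\<Sum>\<nu>\<in>?P. (if \<mu> \<subseteq># \<nu> then ?c \<nu> else 0) * msym (\<nu> - \<mu>) \<beta>))"
    by (subst sum.swap) (auto simp: sum_distrib_left intro!: sum.cong)
  also have "\<dots> = (\<Sum>\<mu>\<in>M. ?e \<mu> * Dlam \<mu> p \<beta>)"
    by (simp add: Dlam_monomial_expansion[OF p])
  finally show ?thesis .
qed

end

theorem mainTheorem9:
  fixes \<theta> :: "series \<Rightarrow> series"
  assumes "linear_on_Lam \<theta>"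
    and "\<forall>a::complex. \<forall>p\<in>Lam. Eop a (\<theta> p) = \<theta> (Eop a p)"
  shows "\<forall>p\<in>Lam. \<theta> p = (\<lambda>\<beta>. \<Sum>\<mu>\<in>{\<mu>\<in>partitions. Dlam \<mu> p \<noteq> (\<lambda>_. 0)}.
            eps (\<theta> (msym \<mu>)) * Dlam \<mu> p \<beta>)"
proof (intro ballI ext)
  fix p \<beta> assume p: "p \<in> Lam"
  interpret shift_invariant \<theta>
    using assms by unfold_locales auto
  define M where "M = (\<Union>\<nu>\<in>coeff_support p. {\<mu>. \<mu> \<subseteq># \<nu>})"
  have "finite M"
    unfolding M_def using finite_coeff_support[OF p] finite_subset_mset by blast
  have "M \<subseteq> partitions"
    unfolding M_def coeff_support_def using partitions_subset_mset by blast
  have "{\<mu>\<in>partitions. Dlam \<mu> p \<noteq> (\<lambda>_. 0)} \<subseteq> M"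
    unfolding M_def by (blast elim: Dlam_nonzero_imp_subset_mset[OF p])
  have "\<theta> p \<beta> = (\<Sum>\<mu>\<in>M. eps (\<theta> (msym \<mu>)) * Dlam \<mu> p \<beta>)"
    by (rule eq_sum_eps_Dlam[OF p \<open>finite M\<close>]) (auto simp: M_def)
  also have "\<dots> = (\<Sum>\<mu>\<in>{\<mu>\<in>partitions. Dlam \<mu> p \<noteq> (\<lambda>_. 0)}. eps (\<theta> (msym \<mu>)) * Dlam \<mu> p \<beta>)"
    using \<open>finite M\<close> \<open>M \<subseteq> partitions\<close> \<open>{\<mu>\<in>partitions. Dlam \<mu> p \<noteq> (\<lambda>_. 0)} \<subseteq> M\<close>
    by (intro sum.mono_neutral_right) auto
  finally show "\<theta> p \<beta> = (\<Sum>\<mu>\<in>{\<mu>\<in>partitions. Dlam \<mu> p \<noteq> (\<lambda>_. 0)}. eps (\<theta> (msym \<mu>)) * Dlam \<mu> p \<beta>)" .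
qed

end
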